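(* For any instance oracle $f$ with $\max\{|f(G,v)|: G \text{ an } n\text{-node graph}, v\in G\}=O(n)$ and any deterministic exploration algorithm $A$, there exist a constant $c>0$ and infinitely many $n$ such that for each of them some $n$-node graph $G$ and starting node $v$ force the agent executing $A$ with input $f(G,v)$ from $v$ to make at least $c n^2$ edge traversals before completing exploration. That is, exploration takes time $\Omega(n^2)$ on some $n$-node graph, for arbitrarily large $n$.
   Context: Model: a graph is a simple connected undirected graph with $n$ nodes. Nodes are unlabeled; at each node of degree $d$ the incident edges carry distinct port numbers $0,\dots,d-1$, arbitrarily assigned. A mobile agent starts at some node. At each step, located at a node $u$ whose degree it knows, it chooses a port at $u$ and traverses the corresponding edge to a neighbor $w$; upon arrival it learns the port number of this edge at $w$ and the degree of $w$. The agent must visit all nodes and stop; the time of exploration is the number of edge traversals. A deterministic exploration algorithm receives as input a binary string (advice); its size is its length. An instance oracle is a function assigning a binary string $f(G,v)$ to each pair $(G,v)$ where $G$ is a port-numbered graph and $v$ is the starting node of the agent. *)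

theory Defs
  imports Complex_Main
begin

text \<open>Nodes are 0..<gsize G (labels are invisible to the agent).
  gdeg G u is the degree of u; gport G u p = (w, q) means that the edge with port p at u
  leads to w and has port q at w.\<close>

record pgraph =
  gsize :: nat
  gdeg  :: "nat \<Rightarrow> nat"
  gport :: "nat \<Rightarrow> nat \<Rightarrow> nat \<times> nat"

definition adj_rel :: "pgraph \<Rightarrow> (nat \<times> nat) set" where
  "adj_rel G = {(u, w). u < gsize G \<and> (\<exists>p < gdeg G u. fst (gport G u p) = w)}"

definition valid_pgraph :: "pgraph \<Rightarrow> bool" where
  "valid_pgraph G \<longleftrightarrow>
     (\<forall>u < gsize G. \<forall>p < gdeg G u.
        fst (gport G u p) < gsize G \<and> fst (gport G u p) \<noteq> u \<and>
        snd (gport G u p) < gdeg G (fst (gport G u p)) \<and>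
        gport G (fst (gport G u p)) (snd (gport G u p)) = (u, p)) \<and>
     (\<forall>u < gsize G. \<forall>p < gdeg G u. \<forall>p' < gdeg G u.
        fst (gport G u p) = fst (gport G u p') \<longrightarrow> p = p') \<and>
     (\<forall>u < gsize G. \<forall>w < gsize G. (u, w) \<in> (adj_rel G)\<^sup>*)"

text \<open>A deterministic exploration algorithm: given the advice, the degree of the starting
  node and the history of observations (port taken, port of arrival, degree of arrival node),
  it either stops (None) or chooses a port (Some p).\<close>
type_synonym algorithm = "bool list \<Rightarrow> nat \<Rightarrow> (nat \<times> nat \<times> nat) list \<Rightarrow> nat option"

fun walk :: "algorithm \<Rightarrow> bool list \<Rightarrow> pgraph \<Rightarrow> nat \<Rightarrow> nat \<Rightarrow> nat \<times> (nat \<times> nat \<times> nat) list" where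
  "walk A x G v 0 = (v, [])"
| "walk A x G v (Suc k) =
     (let (u, h) = walk A x G v k in
      case A x (gdeg G v) h of
        None \<Rightarrow> (u, h)
      | Some p \<Rightarrow>
          (if p < gdeg G u then
             (fst (gport G u p), h @ [(p, snd (gport G u p), gdeg G (fst (gport G u p)))])
           else (u, h)))"

definition completes_exploration ::
  "algorithm \<Rightarrow> bool list \<Rightarrow> pgraph \<Rightarrow> nat \<Rightarrow> nat \<Rightarrow> bool" where
  "completes_exploration A x G v t \<longleftrightarrow>
     (\<forall>k < t. case A x (gdeg G v) (snd (walk A x G v k)) of
                None \<Rightarrow> False
              | Some p \<Rightarrow> p < gdeg G (fst (walk A x G v k))) \<and>
     A x (gdeg G v) (snd (walk A x G v t)) = None \<and>
     {0..<gsize G} \<subseteq> {fst (walk A x G v k) | k. k \<le> t}"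

end

theory Submission
  imports Defs
begin

(* Let G_p be the complete bipartite graph K_{m,m} in which, for each left node i, the edge at
   port p!i of i is subdivided by a new node; there are m^m such graphs, each with 3m nodes.
   Walks on G_p and G_q that have agreed so far continue to agree: a step along a biclique edge
   enters a subdivision node in G_p iff it does in G_q, unless that subdivision node was
   visited before, in which case p and q already agree there.  Hence the walk on G_p is
   determined by the advice together with the m times at which the agent first enters a
   subdivision node, and the walk determines p.  With advice of length O(m) and exploration
   time T this injectivity gives m^m <= 2^(O(m)) * (T choose m) <= 2^(O(m)) * T^m / m!, and
   as m! >= (m/3)^m this forces T = Omega(m^2). *)

section \<open>Port-numbered graphs and walks\<close>

definition proper_port :: "pgraph \<Rightarrow> nat \<Rightarrow> nat \<Rightarrow> bool" where
  "proper_port G u c \<longleftrightarrow>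
     fst (gport G u c) < gsize G \<and> fst (gport G u c) \<noteq> u \<and>
     snd (gport G u c) < gdeg G (fst (gport G u c)) \<and>
     gport G (fst (gport G u c)) (snd (gport G u c)) = (u, c)"

lemma adj_relI: "u < gsize G \<Longrightarrow> c < gdeg G u \<Longrightarrow> (u, fst (gport G u c)) \<in> adj_rel G"
  unfolding adj_rel_def by auto

lemma sym_adj_rel:
  assumes "\<And>u c. u < gsize G \<Longrightarrow> c < gdeg G u \<Longrightarrow> proper_port G u c"
  shows "sym (adj_rel G)"
proof (rule symI)
  fix u w assume "(u, w) \<in> adj_rel G"
  then obtain c where "u < gsize G" "c < gdeg G u" "fst (gport G u c) = w"
    unfolding adj_rel_def by auto
  with assms show "(w, u) \<in> adj_rel G"
    unfolding proper_port_def by (metis adj_relI fst_conv)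
qed

lemma valid_pgraphI:
  assumes proper: "\<And>u c. u < gsize G \<Longrightarrow> c < gdeg G u \<Longrightarrow> proper_port G u c"
    and simple: "\<And>u c c'. u < gsize G \<Longrightarrow> c < gdeg G u \<Longrightarrow> c' < gdeg G u \<Longrightarrow>
                   fst (gport G u c) = fst (gport G u c') \<Longrightarrow> c = c'"
    and reach: "\<And>u. u < gsize G \<Longrightarrow> (v, u) \<in> (adj_rel G)\<^sup>*"
  shows "valid_pgraph G"
proof -
  have "(u, w) \<in> (adj_rel G)\<^sup>*" if "u < gsize G" "w < gsize G" for u w
  proof -
    have "(u, v) \<in> (adj_rel G)\<^sup>*"
      using reach[OF that(1)] sym_rtrancl[OF sym_adj_rel[OF proper]] by (meson symD)
    then show ?thesis using reach[OF that(2)] by simp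
  qed
  then show ?thesis
    using proper simple unfolding valid_pgraph_def proper_port_def by blast
qed

lemma walk_Suc_eq:
  "walk A x G v (Suc k) =
    (case A x (gdeg G v) (snd (walk A x G v k)) of
       None \<Rightarrow> walk A x G v k
     | Some c \<Rightarrow>
         if c < gdeg G (fst (walk A x G v k))
         then (fst (gport G (fst (walk A x G v k)) c),
               snd (walk A x G v k) @ [(c, snd (gport G (fst (walk A x G v k)) c),
                                        gdeg G (fst (gport G (fst (walk A x G v k)) c)))])
         else walk A x G v k)"
  by (cases "walk A x G v k") (simp split: option.splits)

declare walk.simps(2) [simp del]

lemma walk_less_gsize: "valid_pgraph G \<Longrightarrow> v < gsize G \<Longrightarrow> fst (walk A x G v k) < gsize G"
  by (induction k) (auto simp: walk_Suc_eq valid_pgraph_def split: option.splits)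

lemma walk_step_port:
  assumes "fst (walk A x G v (Suc k)) \<noteq> fst (walk A x G v k)"
  obtains c where "A x (gdeg G v) (snd (walk A x G v k)) = Some c"
    and "c < gdeg G (fst (walk A x G v k))"
    and "fst (walk A x G v (Suc k)) = fst (gport G (fst (walk A x G v k)) c)"
  using assms by (auto simp: walk_Suc_eq split: option.splits if_splits)

lemma walk_Suc_port:
  assumes "A x (gdeg G v) (snd (walk A x G v k)) = Some c" "c < gdeg G (fst (walk A x G v k))"
  shows "fst (walk A x G v (Suc k)) = fst (gport G (fst (walk A x G v k)) c)"
  using assms by (simp add: walk_Suc_eq)

lemma first_arrival:
  assumes "fst (walk A x G v k) = w" "w \<noteq> v"
  obtains j where "j < k" "fst (walk A x G v (Suc j)) = w" "\<forall>l\<le>j. fst (walk A x G v l) \<noteq> w"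
proof -
  define j' where "j' = (LEAST j. fst (walk A x G v j) = w)"
  have arrives: "fst (walk A x G v j') = w" and "j' \<le> k"
    unfolding j'_def using assms(1) by (auto intro: LeastI Least_le)
  moreover have "j' \<noteq> 0" using arrives assms(2) by (cases j') auto
  then obtain j where "j' = Suc j" using not0_implies_Suc by blast
  moreover have "\<forall>l\<le>j. fst (walk A x G v l) \<noteq> w"
    using \<open>j' = Suc j\<close> not_less_Least[where P = "\<lambda>j. fst (walk A x G v j) = w"]
    unfolding j'_def by (metis le_imp_less_Suc)
  ultimately show thesis using that Suc_le_lessD by blast
qed

lemma visited_if_completes:
  assumes "completes_exploration A x G v t" "w < gsize G"
  obtains k where "k \<le> t" "fst (walk A x G v k) = w"
  using assms unfolding completes_exploration_def by force

definition first_visits :: "algorithm \<Rightarrow> bool list \<Rightarrow> pgraph \<Rightarrow> nat \<Rightarrow> nat set \<Rightarrow> nat set" where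
  "first_visits A x G v S =
     {k. fst (walk A x G v (Suc k)) \<in> S \<and>
         (\<forall>j\<le>k. fst (walk A x G v j) \<noteq> fst (walk A x G v (Suc k)))}"

lemma first_visits_less:
  assumes "completes_exploration A x G v t" "S \<subseteq> {0..<gsize G}"
  shows "first_visits A x G v S \<subseteq> {..<t}"
proof
  fix k assume k: "k \<in> first_visits A x G v S"
  then have "fst (walk A x G v (Suc k)) < gsize G" using assms(2) unfolding first_visits_def by auto
  then obtain k' where "k' \<le> t" "fst (walk A x G v k') = fst (walk A x G v (Suc k))"
    using visited_if_completes[OF assms(1)] by blast
  moreover have "\<not> k' \<le> k" using k calculation(2) unfolding first_visits_def by auto
  ultimately show "k \<in> {..<t}" by simp
qed

lemma card_first_visits:
  assumes "completes_exploration A x G v t" "S \<subseteq> {0..<gsize G}" "v \<notin> S"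
  shows "card (first_visits A x G v S) = card S"
proof -
  let ?arrival = "\<lambda>k. fst (walk A x G v (Suc k))"
  have "inj_on ?arrival (first_visits A x G v S)"
  proof (rule inj_onI)
    fix a b
    assume visits: "a \<in> first_visits A x G v S" "b \<in> first_visits A x G v S"
      and "?arrival a = ?arrival b"
    show "a = b"
    proof (rule ccontr)
      assume "a \<noteq> b"
      then have "Suc a \<le> b \<or> Suc b \<le> a" by linarith
      then show False using visits \<open>?arrival a = ?arrival b\<close> unfolding first_visits_def by auto
    qed
  qed
  moreover have "?arrival ` first_visits A x G v S = S"
  proof
    show "?arrival ` first_visits A x G v S \<subseteq> S" unfolding first_visits_def by auto
  next
    show "S \<subseteq> ?arrival ` first_visits A x G v S"
    proof
      fix w assume "w \<in> S"
      then have "w < gsize G" "w \<noteq> v" using assms(2,3) by auto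
      then obtain k where "fst (walk A x G v k) = w"
        using visited_if_completes[OF assms(1)] by blast
      then obtain j where "fst (walk A x G v (Suc j)) = w" "\<forall>l\<le>j. fst (walk A x G v l) \<noteq> w"
        using first_arrival \<open>w \<noteq> v\<close> by metis
      then show "w \<in> ?arrival ` first_visits A x G v S"
        using \<open>w \<in> S\<close> unfolding first_visits_def by force
    qed
  qed
  ultimately show ?thesis using card_image by fastforce
qed

section \<open>A subdivided complete bipartite graph\<close>

(* For c, i < m, (c + m - i) mod m is (c - i) mod m computed without truncated subtraction. *)
lemma mod_sub_inverse: "i < m \<Longrightarrow> c < (m::nat) \<Longrightarrow> (c + m - (c + m - i) mod m) mod m = i"
  by (cases "i \<le> c") (simp_all add: le_mod_geq)

lemma mod_sub_inj:
  assumes "i < m" "c < (m::nat)" "c' < m" "(c + m - i) mod m = (c' + m - i) mod m"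
  shows "c = c'"
proof -
  have "((d + m - i) mod m + i) mod m = d" if "d < m" for d
    using \<open>i < m\<close> that by (cases "i \<le> d") (simp_all add: le_mod_geq)
  then show ?thesis using assms by metis
qed

(* Nodes i < m and m + j (i, j < m) form K_{m,m}: port c at i leads to m + (c - i) mod m and
   arrives there through port c. The edge at port p!i of i is subdivided by the node 2m + i,
   whose port 0 leads back to i and whose port 1 leads to the other end of that edge. *)
definition subdivided_biclique :: "nat \<Rightarrow> nat list \<Rightarrow> pgraph" where
 "subdivided_biclique m p = \<lparr>gsize = 3*m, gdeg = (\<lambda>u. if u < 2*m then m else 2),
   gport = (\<lambda>u c.
     if u < m then (if c = p!u then (2*m+u, 0) else (m + (c + m - u) mod m, c))
     else if u < 2*m then
       (if c = p!((c + m - (u-m)) mod m) then (2*m+(c + m - (u-m)) mod m, 1)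
        else ((c + m - (u-m)) mod m, c))
     else if c = 0 then (u - 2*m, p!(u-2*m))
     else (m + (p!(u-2*m) + m - (u-2*m)) mod m, p!(u-2*m)))\<rparr>"

lemma gsize_subdivided_biclique [simp]: "gsize (subdivided_biclique m p) = 3*m"
  by (simp add: subdivided_biclique_def)

lemma gdeg_subdivided_biclique [simp]:
  "gdeg (subdivided_biclique m p) u = (if u < 2*m then m else 2)"
  by (simp add: subdivided_biclique_def)

locale port_choice =
  fixes m :: nat and p :: "nat list"
  assumes m_pos: "0 < m" and length_p: "length p = m" and p_less: "\<And>i. i < m \<Longrightarrow> p!i < m"
begin

abbreviation "G \<equiv> subdivided_biclique m p"

lemma gport_left:
  "u < m \<Longrightarrow> gport G u c = (if c = p!u then (2*m+u, 0) else (m + (c + m - u) mod m, c))"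
  by (simp add: subdivided_biclique_def)

lemma gport_right:
  "j < m \<Longrightarrow> gport G (m + j) c =
     (if c = p!((c + m - j) mod m) then (2*m + (c + m - j) mod m, 1) else ((c + m - j) mod m, c))"
  by (simp add: subdivided_biclique_def)

lemma gport_subdivision:
  "gport G (2*m + i) c = (if c = 0 then (i, p!i) else (m + (p!i + m - i) mod m, p!i))"
  by (simp add: subdivided_biclique_def)

lemma mod_less_m: "a mod m < m"
  using m_pos by simp

lemma node_cases [consumes 1, case_names left right subdivision]:
  assumes "u < 3*m"
  obtains "u < m" | j where "j < m" "u = m + j" | i where "i < m" "u = 2*m + i"
proof -
  consider "u < m" | "m \<le> u" "u < 2*m" | "2*m \<le> u" by linarith
  then show thesis
  proof cases
    case 1 then show thesis using that(1) by simp
  next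
    case 2 then show thesis using that(2)[of "u - m"] by simp
  next
    case 3 then show thesis using that(3)[of "u - 2*m"] assms by simp
  qed
qed

lemma proper_port_left:
  assumes "u < m" "c < m"
  shows "proper_port G u c"
proof (cases "c = p!u")
  case True
  then show ?thesis using assms
    by (simp add: proper_port_def gport_left gport_subdivision)
next
  case False
  define j where "j = (c + m - u) mod m"
  have "j < m" using mod_less_m j_def by simp
  moreover have "(c + m - j) mod m = u" using assms j_def mod_sub_inverse by simp
  ultimately show ?thesis using assms False
    by (simp add: proper_port_def gport_left gport_right j_def[symmetric])
qed

lemma proper_port_right:
  assumes "j < m" "c < m"
  shows "proper_port G (m + j) c"
proof -
  define i where "i = (c + m - j) mod m"
  have "i < m" using mod_less_m i_def by simp
  have round_trip: "(c + m - i) mod m = j" using mod_sub_inverse assms i_def by simp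
  show ?thesis
  proof (cases "c = p!i")
    case True
    have "gport G (m + j) c = (2*m + i, 1)" using True assms by (simp add: gport_right i_def)
    moreover have "gport G (2*m + i) 1 = (m + j, c)"
      using True round_trip by (simp add: gport_subdivision)
    ultimately show ?thesis using \<open>i < m\<close> assms by (simp add: proper_port_def)
  next
    case False
    have "gport G (m + j) c = (i, c)" using False assms by (simp add: gport_right i_def)
    moreover have "gport G i c = (m + j, c)"
      using False round_trip \<open>i < m\<close> by (simp add: gport_left)
    ultimately show ?thesis using \<open>i < m\<close> assms by (simp add: proper_port_def)
  qed
qed

lemma proper_port_subdivision:
  assumes "i < m" "c < 2"
  shows "proper_port G (2*m + i) c"
proof -
  have "p!i < m" using p_less assms by simp
  define j where "j = (p!i + m - i) mod m"
  have "j < m" using mod_less_m j_def by simp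
  have round_trip: "(p!i + m - j) mod m = i" using mod_sub_inverse assms \<open>p!i < m\<close> j_def by simp
  show ?thesis
  proof (cases "c = 0")
    case True
    have "gport G (2*m + i) c = (i, p!i)" using True by (simp add: gport_subdivision)
    moreover have "gport G i (p!i) = (2*m + i, c)" using True assms by (simp add: gport_left)
    ultimately show ?thesis using \<open>p!i < m\<close> assms by (simp add: proper_port_def)
  next
    case False
    then have "c = 1" using assms by simp
    have "gport G (2*m + i) c = (m + j, p!i)" using False by (simp add: gport_subdivision j_def)
    moreover have "gport G (m + j) (p!i) = (2*m + i, c)"
      using \<open>c = 1\<close> round_trip \<open>j < m\<close> by (simp add: gport_right)
    ultimately show ?thesis using \<open>j < m\<close> \<open>p!i < m\<close> assms by (simp add: proper_port_def)
  qed
qed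

lemma proper_port_G:
  assumes "u < 3*m" "c < gdeg G u"
  shows "proper_port G u c"
  using assms(1) by (cases rule: node_cases)
    (use assms(2) in \<open>simp_all add: proper_port_left proper_port_right proper_port_subdivision\<close>)

lemma ports_distinct_targets:
  assumes "u < 3*m" "c < gdeg G u" "c' < gdeg G u" "fst (gport G u c) = fst (gport G u c')"
  shows "c = c'"
  using assms(1)
proof (cases rule: node_cases)
  case left
  have "x mod m \<noteq> m + u" for x using mod_less_m[of x] by simp
  then show ?thesis using assms left mod_sub_inj[OF left, of c c']
    by (auto simp: gport_left split: if_splits)
next
  case (right j)
  have "x mod m \<noteq> 2*m + y mod m" for x y using mod_less_m[of x] by simp
  then show ?thesis using assms right mod_sub_inj[of j m c c']
    by (auto simp: gport_right split: if_splits) metis+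
next
  case (subdivision i)
  then show ?thesis using assms mod_less_m[of "p!i + m - i"]
    by (auto simp: gport_subdivision split: if_splits)
qed

lemma reaches_right: "j < m \<Longrightarrow> (0, m+j) \<in> (adj_rel G)\<^sup>*"
proof (cases "j = p!0")
  case False
  assume "j < m"
  then have "(0, m+j) \<in> adj_rel G" using False m_pos adj_relI[of 0 G j] by (simp add: gport_left)
  then show ?thesis by simp
next
  case True
  assume "j < m"
  then have "(0, 2*m) \<in> adj_rel G" "(2*m, m+j) \<in> adj_rel G"
    using True m_pos adj_relI[of 0 G j] adj_relI[of "2*m" G 1]
    by (simp_all add: gport_left gport_subdivision[of 0, simplified])
  then show ?thesis by (meson converse_rtrancl_into_rtrancl r_into_rtrancl)
qed

lemma reaches_left: "i < m \<Longrightarrow> (0, i) \<in> (adj_rel G)\<^sup>*"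
proof -
  assume "i < m"
  have "(0, m) \<in> (adj_rel G)\<^sup>*" using reaches_right[of 0] m_pos by simp
  moreover have "(m, i) \<in> (adj_rel G)\<^sup>*"
  proof (cases "i = p!i")
    case False
    then have "(m, i) \<in> adj_rel G" using \<open>i < m\<close> m_pos adj_relI[of m G i]
      by (simp add: gport_right[of 0, simplified])
    then show ?thesis by simp
  next
    case True
    then have "(m, 2*m+i) \<in> adj_rel G" "(2*m+i, i) \<in> adj_rel G"
      using \<open>i < m\<close> m_pos adj_relI[of m G i] adj_relI[of "2*m+i" G 0]
      by (simp_all add: gport_right[of 0, simplified] gport_subdivision)
    then show ?thesis by (meson converse_rtrancl_into_rtrancl r_into_rtrancl)
  qed
  ultimately show ?thesis by simp
qed

lemma reaches_node:
  assumes "u < 3*m"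
  shows "(0, u) \<in> (adj_rel G)\<^sup>*"
  using assms
proof (cases rule: node_cases)
  case (subdivision i)
  then have "(i, u) \<in> adj_rel G" using adj_relI[of i G "p!i"] p_less by (simp add: gport_left)
  then show ?thesis using reaches_left[OF \<open>i < m\<close>] by simp
qed (simp_all add: reaches_left reaches_right)

lemma valid_G: "valid_pgraph G"
  using proper_port_G ports_distinct_targets reaches_node by (intro valid_pgraphI) auto

end

section \<open>Reconstructing the port choice from the walk\<close>

definition port_choices :: "nat \<Rightarrow> nat list set" where
  "port_choices m = {p. set p \<subseteq> {..<m} \<and> length p = m}"

definition left_end :: "nat \<Rightarrow> nat \<Rightarrow> nat \<Rightarrow> nat" where
  "left_end m u c = (if u < m then u else (c + m - (u - m)) mod m)"

lemma port_choiceI: "0 < m \<Longrightarrow> p \<in> port_choices m \<Longrightarrow> port_choice m p"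
  by unfold_locales (auto simp: port_choices_def dest: nth_mem)

context port_choice
begin

lemma left_end_less: "u < 2*m \<Longrightarrow> left_end m u c < m"
  using m_pos by (simp add: left_end_def)

lemma gport_hits_subdivision:
  "u < 2*m \<Longrightarrow> c = p!(left_end m u c) \<Longrightarrow> fst (gport G u c) = 2*m + left_end m u c"
  by (cases "u < m") (simp_all add: subdivided_biclique_def left_end_def)

lemma gport_into_subdivision:
  assumes "u < 3*m" "c < gdeg G u" "2*m \<le> fst (gport G u c)"
  shows "u < 2*m \<and> c = p!(left_end m u c) \<and> fst (gport G u c) = 2*m + left_end m u c"
  using assms(1)
proof (cases rule: node_cases)
  case left
  define j where "j = (c + m - u) mod m"
  have "j < m" using mod_less_m j_def by simp
  then show ?thesis using assms left
    by (cases "c = p!u") (auto simp: gport_left left_end_def j_def[symmetric])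
next
  case (right j)
  define i where "i = (c + m - j) mod m"
  have "i < m" using mod_less_m i_def by simp
  have "left_end m u c = i" using right by (simp add: left_end_def i_def)
  moreover have "gport G u c = (if c = p!i then (2*m + i, 1) else (i, c))"
    using right by (simp add: gport_right i_def)
  ultimately show ?thesis using assms(3) right \<open>i < m\<close> by (cases "c = p!i") simp_all
next
  case (subdivision i)
  define j where "j = (p!i + m - i) mod m"
  have "j < m" using mod_less_m j_def by simp
  then show ?thesis using assms subdivision
    by (auto simp: gport_subdivision j_def[symmetric] split: if_splits)
qed

end

lemma gport_subdivided_biclique_cong:
  assumes "u < 2*m \<Longrightarrow> c = p!(left_end m u c) \<longleftrightarrow> c = q!(left_end m u c)"
    and "2*m \<le> u \<Longrightarrow> p!(u - 2*m) = q!(u - 2*m)"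
  shows "gport (subdivided_biclique m p) u c = gport (subdivided_biclique m q) u c"
proof -
  consider "u < m" | "m \<le> u" "u < 2*m" | "2*m \<le> u" by linarith
  then show ?thesis
  proof cases
    case 1
    then have "c = p!u \<longleftrightarrow> c = q!u" using assms(1) by (simp add: left_end_def)
    then show ?thesis using 1 by (simp add: subdivided_biclique_def)
  next
    case 2
    then have "c = p!((c + m - (u - m)) mod m) \<longleftrightarrow> c = q!((c + m - (u - m)) mod m)"
      using assms(1) by (simp add: left_end_def)
    then show ?thesis using 2 by (simp add: subdivided_biclique_def)
  qed (use assms(2) in \<open>simp add: subdivided_biclique_def\<close>)
qed

abbreviation biclique_walk ::
  "algorithm \<Rightarrow> bool list \<Rightarrow> nat \<Rightarrow> nat list \<Rightarrow> nat \<Rightarrow> nat \<times> (nat \<times> nat \<times> nat) list" where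
  "biclique_walk A x m p \<equiv> walk A x (subdivided_biclique m p) 0"

abbreviation discoveries :: "algorithm \<Rightarrow> bool list \<Rightarrow> nat \<Rightarrow> nat list \<Rightarrow> nat set" where
  "discoveries A x m p \<equiv> first_visits A x (subdivided_biclique m p) 0 {2*m..<3*m}"

lemma biclique_walk_less: "port_choice m p \<Longrightarrow> fst (biclique_walk A x m p k) < 3*m"
  using walk_less_gsize[OF port_choice.valid_G, of m p 0] port_choice.m_pos[of m p] by simp

lemma port_eq_if_subdivision_visited:
  assumes P: "port_choice m p" and Q: "port_choice m q"
    and agree: "\<forall>j\<le>k. biclique_walk A x m p j = biclique_walk A x m q j"
    and "j0 \<le> k" "fst (biclique_walk A x m p j0) = 2*m + i" "i < m"
  shows "p!i = q!i"
proof -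
  have "2*m + i \<noteq> 0" using port_choice.m_pos[OF P] by simp
  then obtain j where "j < j0" and arrive: "fst (biclique_walk A x m p (Suc j)) = 2*m + i"
    and "fst (biclique_walk A x m p j) \<noteq> 2*m + i"
    using first_arrival[OF assms(5) \<open>2*m + i \<noteq> 0\<close>] by (metis le_refl)
  define u where "u = fst (biclique_walk A x m p j)"
  have "fst (biclique_walk A x m p (Suc j)) \<noteq> u"
    using arrive u_def \<open>fst (biclique_walk A x m p j) \<noteq> 2*m + i\<close> by simp
  then obtain c
    where choose: "A x (gdeg (subdivided_biclique m p) 0) (snd (biclique_walk A x m p j)) = Some c"
    and c_less: "c < gdeg (subdivided_biclique m p) u"
    and step: "fst (biclique_walk A x m p (Suc j)) = fst (gport (subdivided_biclique m p) u c)"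
    using walk_step_port unfolding u_def by blast
  have "u < 3*m" using biclique_walk_less[OF P] u_def by simp
  then have "c = p!(left_end m u c) \<and> 2*m + i = 2*m + left_end m u c"
    using port_choice.gport_into_subdivision[OF P _ c_less] step arrive by simp
  then have p_hit: "c = p!(left_end m u c)" "left_end m u c = i" by simp_all
  have "biclique_walk A x m q j = biclique_walk A x m p j"
    and "biclique_walk A x m q (Suc j) = biclique_walk A x m p (Suc j)"
    using agree \<open>j < j0\<close> \<open>j0 \<le> k\<close> by simp_all
  then have "fst (gport (subdivided_biclique m q) u c) = 2*m + i"
    using walk_Suc_port[of A x "subdivided_biclique m q" 0 j c] choose c_less arrive
    unfolding u_def by simp
  then have "c = q!(left_end m u c)"
    using port_choice.gport_into_subdivision[OF Q \<open>u < 3*m\<close>] c_less by simp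
  then show ?thesis using p_hit by simp
qed

lemma subdivision_port_agrees:
  assumes P: "port_choice m p" and Q: "port_choice m q"
    and agree: "\<forall>j\<le>k. biclique_walk A x m p j = biclique_walk A x m q j"
    and same: "discoveries A x m p = discoveries A x m q"
    and u: "fst (biclique_walk A x m p k) = u" "u < 2*m"
    and choose: "A x m (snd (biclique_walk A x m p k)) = Some c" and "c < m"
    and hit: "c = p!(left_end m u c)"
  shows "c = q!(left_end m u c)"
proof -
  define i where "i = left_end m u c"
  have "i < m" using port_choice.left_end_less[OF P u(2)] i_def by simp
  have "fst (gport (subdivided_biclique m p) u c) = 2*m + i"
    using port_choice.gport_hits_subdivision[OF P u(2) hit] i_def by simp
  then have arrive: "fst (biclique_walk A x m p (Suc k)) = 2*m + i"
    using walk_Suc_port[of A x _ 0 k c] choose \<open>c < m\<close> u by simp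
  show ?thesis
  proof (cases "\<exists>j\<le>k. fst (biclique_walk A x m p j) = 2*m + i")
    case True
    then have "p!i = q!i" using port_eq_if_subdivision_visited[OF P Q agree] \<open>i < m\<close> by blast
    then show ?thesis using hit i_def by simp
  next
    case False
    then have "k \<in> discoveries A x m p" using arrive \<open>i < m\<close> unfolding first_visits_def by auto
    then have "k \<in> discoveries A x m q" using same by simp
    then have "2*m \<le> fst (biclique_walk A x m q (Suc k))" unfolding first_visits_def by simp
    moreover have "fst (biclique_walk A x m q (Suc k)) = fst (gport (subdivided_biclique m q) u c)"
      using walk_Suc_port[of A x _ 0 k c] agree choose \<open>c < m\<close> u by simp
    ultimately show ?thesis
      using port_choice.gport_into_subdivision[OF Q _ _] u \<open>c < m\<close> by simp
  qed
qed

lemma walks_agree_if_discoveries_eq: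
  assumes P: "port_choice m p" and Q: "port_choice m q"
    and same: "discoveries A x m p = discoveries A x m q"
  shows "\<forall>j\<le>k. biclique_walk A x m p j = biclique_walk A x m q j"
proof (induction k)
  case (Suc k)
  define u where "u = fst (biclique_walk A x m p k)"
  have agree_k: "biclique_walk A x m q k = biclique_walk A x m p k" using Suc.IH by simp
  have ports_agree: "gport (subdivided_biclique m p) u c = gport (subdivided_biclique m q) u c"
    if choose: "A x m (snd (biclique_walk A x m p k)) = Some c"
      and "c < gdeg (subdivided_biclique m p) u" for c
  proof (rule gport_subdivided_biclique_cong)
    assume "u < 2*m"
    then have "c < m" using \<open>c < _\<close> by simp
    have agree_sym: "\<forall>j\<le>k. biclique_walk A x m q j = biclique_walk A x m p j" using Suc.IH by simp
    have "fst (biclique_walk A x m q k) = u" "A x m (snd (biclique_walk A x m q k)) = Some c"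
      using agree_k u_def choose by simp_all
    then show "c = p!(left_end m u c) \<longleftrightarrow> c = q!(left_end m u c)"
      using subdivision_port_agrees[OF P Q Suc.IH same u_def[symmetric] \<open>u < 2*m\<close> choose \<open>c < m\<close>]
        subdivision_port_agrees[OF Q P agree_sym same[symmetric] _ \<open>u < 2*m\<close> _ \<open>c < m\<close>]
      by blast
  next
    assume "2*m \<le> u"
    moreover have "u < 3*m" using biclique_walk_less[OF P] u_def by simp
    ultimately show "p!(u - 2*m) = q!(u - 2*m)"
      using port_eq_if_subdivision_visited[OF P Q Suc.IH le_refl, of "u - 2*m"] u_def by simp
  qed
  then have "biclique_walk A x m p (Suc k) = biclique_walk A x m q (Suc k)"
    unfolding walk_Suc_eq agree_k u_def[symmetric] using port_choice.m_pos[OF P] ports_agree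
    by (simp split: option.splits)
  then show ?case using Suc.IH le_Suc_eq by auto
qed simp

lemma port_choice_eq_if_discoveries_eq:
  assumes P: "port_choice m p" and Q: "port_choice m q"
    and "completes_exploration A x (subdivided_biclique m p) 0 t"
    and same: "discoveries A x m p = discoveries A x m q"
  shows "p = q"
proof (rule nth_equalityI)
  show "length p = length q" using port_choice.length_p[OF P] port_choice.length_p[OF Q] by simp
next
  fix i assume "i < length p"
  then have "i < m" using port_choice.length_p[OF P] by simp
  then have "2*m + i < gsize (subdivided_biclique m p)" by simp
  then obtain k where "fst (biclique_walk A x m p k) = 2*m + i"
    using visited_if_completes[OF assms(3)] by blast
  then show "p!i = q!i"
    using port_eq_if_subdivision_visited[OF P Q walks_agree_if_discoveries_eq[OF P Q same] le_refl]
      \<open>i < m\<close> by blast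
qed

section \<open>Counting port choices\<close>

lemma card_port_choices: "card (port_choices m) = m ^ m"
  using card_lists_length_eq[of "{..<m}" m] by (simp add: port_choices_def)

lemma finite_bool_lists_length_le: "finite {xs :: bool list. length xs \<le> L}"
  using finite_lists_length_le[of "UNIV :: bool set" L] by simp

lemma card_bool_lists_length_le: "card {xs :: bool list. length xs \<le> L} < 2 ^ Suc L"
proof -
  have "card {xs :: bool list. length xs \<le> L} = (\<Sum>i\<le>L. 2 ^ i)"
    using card_lists_length_le[of "UNIV :: bool set" L] by simp
  also have "\<dots> < 2 ^ Suc L" by (induction L) auto
  finally show ?thesis .
qed

lemma discoveries_times:
  assumes P: "port_choice m p" and "completes_exploration A x (subdivided_biclique m p) 0 t"
  shows "discoveries A x m p \<subseteq> {..<t}" "card (discoveries A x m p) = m"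
proof -
  have S: "{2*m..<3*m} \<subseteq> {0..<gsize (subdivided_biclique m p)}" by auto
  show "discoveries A x m p \<subseteq> {..<t}" using first_visits_less[OF assms(2) S] .
  have "0 \<notin> {2*m..<3*m}" using port_choice.m_pos[OF P] by simp
  then show "card (discoveries A x m p) = m" using card_first_visits[OF assms(2) S] by simp
qed

lemma port_choices_counting:
  fixes x :: "nat list \<Rightarrow> bool list"
  assumes "0 < m"
    and explores: "\<And>p. p \<in> port_choices m \<Longrightarrow> length (x p) \<le> L \<and>
                     (\<exists>t<T. completes_exploration A (x p) (subdivided_biclique m p) 0 t)"
  shows "m ^ m \<le> 2 ^ Suc L * (T choose m)"
proof -
  define code where "code p = (x p, discoveries A (x p) m p)" for p
  let ?advice = "{xs :: bool list. length xs \<le> L}" and ?times = "{E. E \<subseteq> {..<T} \<and> card E = m}"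
  have "inj_on code (port_choices m)"
  proof (rule inj_onI)
    fix p q assume p: "p \<in> port_choices m" and q: "q \<in> port_choices m" and "code p = code q"
    then have "x p = x q" and same: "discoveries A (x p) m p = discoveries A (x q) m q"
      unfolding code_def prod.inject by blast+
    then have "discoveries A (x p) m p = discoveries A (x p) m q" by metis
    moreover obtain t where "completes_exploration A (x p) (subdivided_biclique m p) 0 t"
      using explores[OF p] by blast
    ultimately show "p = q"
      using port_choice_eq_if_discoveries_eq[OF port_choiceI port_choiceI] \<open>0 < m\<close> p q by blast
  qed
  moreover have "code ` port_choices m \<subseteq> ?advice \<times> ?times"
  proof
    fix y assume "y \<in> code ` port_choices m"
    then obtain p where p: "p \<in> port_choices m" and y: "y = code p" by blast
    obtain t where "t < T"
      and explored: "completes_exploration A (x p) (subdivided_biclique m p) 0 t"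
      using explores[OF p] by blast
    note visits = discoveries_times[OF port_choiceI[OF \<open>0 < m\<close> p] explored]
    have "discoveries A (x p) m p \<subseteq> {..<T}" using visits(1) \<open>t < T\<close> by auto
    then show "y \<in> ?advice \<times> ?times"
      using visits(2) explores[OF p] unfolding y code_def by simp
  qed
  moreover have "finite (?advice \<times> ?times)" using finite_bool_lists_length_le by simp
  ultimately have "card (port_choices m) \<le> card (?advice \<times> ?times)" by (rule card_inj_on_le)
  also have "\<dots> = card ?advice * card ?times" by (rule card_cartesian_product)
  also have "\<dots> \<le> 2 ^ Suc L * (T choose m)"
    using card_bool_lists_length_le[of L] n_subsets[of "{..<T}" m] by simp
  finally show ?thesis using card_port_choices by simp
qed

section \<open>The quadratic lower bound\<close>

lemma self_pow_le_three_pow_fact: "real m ^ m \<le> 3 ^ m * fact m"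
proof -
  have exp_series: "(\<lambda>n. real m ^ n / fact n) sums exp (real m)"
    using exp_converges[of "real m"] by (simp add: divide_inverse mult.commute)
  have "(\<Sum>n\<in>{m}. real m ^ n / fact n) \<le> (\<Sum>n. real m ^ n / fact n)"
    by (rule sum_le_suminf) (use exp_series sums_summable in auto)
  then have "real m ^ m / fact m \<le> exp (real m)" using sums_unique[OF exp_series] by simp
  also have "\<dots> = exp 1 ^ m" using exp_of_nat_mult[of m 1] by simp
  also have "\<dots> \<le> 3 ^ m" by (rule power_mono[OF exp_le]) simp
  finally show ?thesis by (simp add: divide_le_eq)
qed

lemma quadratic_bound_from_counting:
  assumes "3 \<le> m" and count: "m ^ m \<le> 2 ^ Suc (3*K*m) * (T choose m)"
  shows "real m ^ 2 < 4 * 8^K * real T"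
proof (rule ccontr)
  assume "\<not> ?thesis"
  then have small_T: "3 * 8^K * real T \<le> (3/4) * real m ^ 2" by linarith
  have "(2::nat) ^ Suc (3*K*m) = 2 * (8^K)^m" by (simp add: power_mult)
  then have "m ^ m * fact m \<le> 2 * (8^K)^m * ((T choose m) * fact m)"
    using mult_le_mono1[OF count, of "fact m"] by (simp add: mult.assoc)
  also have "\<dots> \<le> 2 * (8^K)^m * T ^ m" using binomial_fact_pow[of T m] by simp
  finally have "real (m ^ m * fact m) \<le> real (2 * (8^K)^m * T ^ m)" by (simp only: of_nat_le_iff)
  then have counted: "real m ^ m * fact m \<le> 2 * (8^K)^m * real T ^ m" by simp
  have "(real m ^ 2) ^ m = real m ^ m * real m ^ m"
    by (simp add: power2_eq_square power_mult_distrib)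
  also have "\<dots> \<le> 3 ^ m * (real m ^ m * fact m)"
    using mult_right_mono[OF self_pow_le_three_pow_fact[of m], of "real m ^ m"]
    by (simp add: ac_simps)
  also have "\<dots> \<le> 2 * (3 * 8^K * real T) ^ m"
    using mult_left_mono[OF counted, of "3 ^ m"] by (simp add: power_mult_distrib ac_simps)
  also have "\<dots> \<le> 2 * ((3/4) * real m ^ 2) ^ m"
    using power_mono[OF small_T, of m] by simp
  also have "\<dots> = 2 * (3/4) ^ m * (real m ^ 2) ^ m"
    by (simp only: power_mult_distrib mult.assoc)
  finally have "(real m ^ 2) ^ m \<le> 2 * (3/4) ^ m * (real m ^ 2) ^ m" .
  moreover have "0 < (real m ^ 2) ^ m" using \<open>3 \<le> m\<close> by simp
  ultimately have "1 \<le> 2 * (3/4::real) ^ m" by simp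
  moreover have "(3/4::real) ^ m \<le> (3/4) ^ 3" using \<open>3 \<le> m\<close> by (intro power_decreasing) auto
  ultimately show False by (simp add: power3_eq_cube del: power_decreasing_iff)
qed

lemma exists_slow_instance:
  fixes f :: "pgraph \<Rightarrow> nat \<Rightarrow> bool list"
  assumes large: "40 * 8^K \<le> m"
    and advice: "\<And>G. valid_pgraph G \<Longrightarrow> gsize G = 3*m \<Longrightarrow> length (f G 0) \<le> 3*K*m"
  shows "\<exists>G. valid_pgraph G \<and> gsize G = 3*m \<and>
           (\<forall>t. completes_exploration A (f G 0) G 0 t \<longrightarrow> real (3*m) ^ 2 / (40 * 8^K) \<le> real t)"
proof (rule ccontr)
  define bound :: real where "bound = real (3*m) ^ 2 / (40 * 8^K)"
  define T where "T = nat \<lceil>bound\<rceil>"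
  assume "\<not> ?thesis"
  then have no_slow: "\<exists>t. completes_exploration A (f G 0) G 0 t \<and> real t < bound"
    if "valid_pgraph G" "gsize G = 3*m" for G
    using that unfolding bound_def by (auto simp: not_le)
  have "3 \<le> m" "0 < m" using large order_trans[OF _ large, of 40] by simp_all
  have "length (f (subdivided_biclique m p) 0) \<le> 3*K*m \<and>
      (\<exists>t<T. completes_exploration A (f (subdivided_biclique m p) 0) (subdivided_biclique m p) 0 t)"
    if p: "p \<in> port_choices m" for p
  proof -
    note valid = port_choice.valid_G[OF port_choiceI[OF \<open>0 < m\<close> p]]
    obtain t
      where "completes_exploration A (f (subdivided_biclique m p) 0) (subdivided_biclique m p) 0 t"
        and "real t < bound"
      using no_slow[OF valid] by auto
    moreover have "t < T" using \<open>real t < bound\<close> unfolding T_def by linarith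
    ultimately show ?thesis using advice[OF valid] by auto
  qed
  then have "m ^ m \<le> 2 ^ Suc (3*K*m) * (T choose m)" by (rule port_choices_counting[OF \<open>0 < m\<close>])
  then have "real m ^ 2 < 4 * 8^K * real T" by (rule quadratic_bound_from_counting[OF \<open>3 \<le> m\<close>])
  also have "\<dots> \<le> 4 * 8^K * (bound + 1)" unfolding T_def bound_def by simp
  also have "\<dots> = (9/10) * real m ^ 2 + 4 * 8^K" unfolding bound_def by (simp add: field_simps)
  finally have "real m ^ 2 < (9/10) * real m ^ 2 + 4 * 8^K" .
  moreover have "40 * 8^K \<le> real m ^ 2"
  proof -
    have "real m * 1 \<le> real m * real m" using \<open>0 < m\<close> by (intro mult_left_mono) auto
    moreover have "real (40 * 8^K) \<le> real m" using large by (simp only: of_nat_le_iff)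
    ultimately show ?thesis by (simp add: power2_eq_square)
  qed
  ultimately show False by linarith
qed

theorem mainTheorem9:
  fixes f :: "pgraph \<Rightarrow> nat \<Rightarrow> bool list" and A :: algorithm
  assumes "\<exists>C::real. \<exists>N. \<forall>n \<ge> N. \<forall>G v. valid_pgraph G \<and> gsize G = n \<and> v < n
                 \<longrightarrow> real (length (f G v)) \<le> C * real n"
  shows "\<exists>c::real > 0. \<forall>N. \<exists>n \<ge> N. \<exists>G v. valid_pgraph G \<and> gsize G = n \<and> v < n \<and>
           (\<forall>t. completes_exploration A (f G v) G v t \<longrightarrow> real t \<ge> c * real n ^ 2)"
proof -
  obtain C N1 where advice_bound: "\<And>G v. valid_pgraph G \<Longrightarrow> gsize G \<ge> N1 \<Longrightarrow> v < gsize G \<Longrightarrow>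
      real (length (f G v)) \<le> C * real (gsize G)"
    using assms by blast
  obtain K :: nat where "C \<le> real K" using real_arch_simple by blast
  have "\<exists>n \<ge> N. \<exists>G v. valid_pgraph G \<and> gsize G = n \<and> v < n \<and>
          (\<forall>t. completes_exploration A (f G v) G v t \<longrightarrow> real t \<ge> real n ^ 2 / (40 * 8^K))" for N
  proof -
    define m where "m = N + N1 + 40 * 8^K"
    have "0 < 3*m" "40 * 8^K \<le> m" "N \<le> 3*m" by (simp_all add: m_def)
    have "length (f G 0) \<le> 3*K*m" if "valid_pgraph G" "gsize G = 3*m" for G
    proof -
      have "real (length (f G 0)) \<le> C * real (3*m)"
        using advice_bound[OF that(1)] that(2) \<open>0 < 3*m\<close> by (simp add: m_def)
      also have "\<dots> \<le> real (3*K*m)" using \<open>C \<le> real K\<close> by (simp add: mult_right_mono)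
      finally show ?thesis by (simp only: of_nat_le_iff)
    qed
    then show ?thesis
      using exists_slow_instance[OF \<open>40 * 8^K \<le> m\<close>] \<open>0 < 3*m\<close> \<open>N \<le> 3*m\<close> by blast
  qed
  then show ?thesis by (intro exI[of _ "1 / (40 * 8^K)"]) auto
qed

end
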